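(* Let $k\ge 1$ and let $p_k(n)$ be the number of partitions of $n$ into exactly $k$ positive parts. Let $\{a_j\}_{j\ge 0}$ be the coefficients of the power series expansion of the rational function $$A_k(q)=\frac{(1-q^k)^k}{\prod_{m=1}^{k}(1-q^m)}=\sum_{j\ge 0}a_jq^j.$$ For integers $x$ and $j$ define $$\mathcal{B}_{k,j}(x)=\binom{\lfloor \frac{x-j}{k}\rfloor+k-1}{k-1}\cdot\delta_{(x-j)\equiv 0 \pmod k},$$ where $\delta_{(x-j)\equiv 0\pmod k}$ equals $1$ if $k\mid x-j$ and $0$ otherwise. Then for every integer $n\ge k$, $$p_k(n)=\sum_{j=0}^{n-k}a_j\,\mathcal{B}_{k,j}(n-k).$$
   Context: $\mathcal{B}_{k,j}$ is called the Simplicial Ehrhart Basis in the paper. *)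

theory Defs
  imports Main "HOL-Computational_Algebra.Formal_Power_Series"
begin

definition part_count :: "nat \<Rightarrow> nat \<Rightarrow> nat" where
  "part_count k n = card {xs :: nat list. sorted xs \<and> length xs = k \<and>
      (\<forall>x\<in>set xs. 0 < x) \<and> sum_list xs = n}"

definition A_fps :: "nat \<Rightarrow> rat fps" where
  "A_fps k = (1 - fps_X ^ k) ^ k * inverse (\<Prod>m\<in>{1..k}. (1 - fps_X ^ m))"

definition ehrhart_B :: "nat \<Rightarrow> int \<Rightarrow> int \<Rightarrow> rat" where
  "ehrhart_B k j x = (if int k dvd (x - j)
      then (of_int ((x - j) div int k + int k - 1)) gchoose (k - 1) else 0)"

end

theory Submission
  imports Defs
begin

text \<open>Removing a smallest part equal to 1, or else subtracting 1 from every part, gives the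
  recurrence \<open>p\<^sub>k(n) = p\<^sub>k\<^sub>-\<^sub>1(n - 1) + p\<^sub>k(n - k)\<close>. Hence the generating function of \<open>p\<^sub>k\<close> is
  \<open>q\<^sup>k / \<Prod>\<^sub>m\<^sub>=\<^sub>1\<^sub>.\<^sub>.\<^sub>k (1 - q\<^sup>m) = q\<^sup>k A\<^sub>k(q) (1 - q\<^sup>k)\<^sup>-\<^sup>k\<close>, and the coefficient of \<open>q\<^sup>m\<close> in
  \<open>(1 - q\<^sup>k)\<^sup>-\<^sup>k\<close> is \<open>\<B>\<^sub>k\<^sub>,\<^sub>j(j + m)\<close> for every \<open>j\<close>. Comparing coefficients of \<open>q\<^sup>n\<close> gives the
  convolution.\<close>

unbundle fps_syntax

definition partition_lists :: "nat \<Rightarrow> nat \<Rightarrow> nat list set" where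
  "partition_lists k n = {xs. sorted xs \<and> length xs = k \<and> (\<forall>x\<in>set xs. 0 < x) \<and> sum_list xs = n}"

lemma part_count_eq_card: "part_count k n = card (partition_lists k n)"
  unfolding part_count_def partition_lists_def ..

lemma finite_partition_lists: "finite (partition_lists k n)"
proof (rule finite_subset)
  show "partition_lists k n \<subseteq> {xs. set xs \<subseteq> {0..n} \<and> length xs = k}"
    unfolding partition_lists_def using member_le_sum_list by fastforce
qed (rule finite_lists_length_eq, simp)

lemma length_le_sum_list_pos: "\<forall>x\<in>set xs. 0 < (x::nat) \<Longrightarrow> length xs \<le> sum_list xs"
  by (induction xs) auto

lemma partition_lists_eq_empty: "n < k \<Longrightarrow> partition_lists k n = {}"
  unfolding partition_lists_def using length_le_sum_list_pos by fastforce

lemma partition_lists_0: "partition_lists 0 n = (if n = 0 then {[]} else {})"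
  unfolding partition_lists_def by auto

lemma map_Suc_in_partition_lists:
  "zs \<in> partition_lists k (n - k) \<Longrightarrow> k \<le> n \<Longrightarrow> map Suc zs \<in> partition_lists k n"
  unfolding partition_lists_def by (auto simp: sorted_map sum_list_Suc[of id, simplified])

lemma partition_lists_decompose:
  assumes "1 \<le> k" "k \<le> n"
  shows "partition_lists k n =
    Cons 1 ` partition_lists (k - 1) (n - 1) \<union> map Suc ` partition_lists k (n - k)"
    (is "?P = ?ones \<union> ?shifted")
proof
  show "?P \<subseteq> ?ones \<union> ?shifted"
  proof
    fix xs assume xs: "xs \<in> ?P"
    then obtain x ys where xs_eq: "xs = x # ys"
      using assms unfolding partition_lists_def by (cases xs) auto
    show "xs \<in> ?ones \<union> ?shifted"
    proof (cases "x = 1")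
      case True
      then show ?thesis using xs unfolding xs_eq partition_lists_def by auto
    next
      case False
      \<comment> \<open>the head of a sorted list is its minimum\<close>
      then have ge2: "\<forall>y\<in>set xs. 2 \<le> y"
        using xs unfolding xs_eq partition_lists_def by force
      define zs where "zs = map (\<lambda>y. y - 1) xs"
      have xs_zs: "xs = map Suc zs"
        unfolding zs_def using ge2 by (induction xs) auto
      have "sorted zs"
        unfolding zs_def using xs by (auto simp: partition_lists_def intro!: sorted_map_mono mono_onI)
      moreover have "sum_list zs + k = n" "length zs = k"
        using xs sum_list_Suc[of id zs] unfolding xs_zs partition_lists_def by auto
      ultimately have "zs \<in> partition_lists k (n - k)"
        unfolding partition_lists_def zs_def using ge2 by auto
      then show ?thesis using xs_zs by blast
    qed
  qed
  show "?ones \<union> ?shifted \<subseteq> ?P"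
    using assms map_Suc_in_partition_lists unfolding partition_lists_def by (auto simp: Suc_le_eq)
qed

lemma part_count_rec:
  assumes "1 \<le> k" "k \<le> n"
  shows "part_count k n = part_count (k - 1) (n - 1) + part_count k (n - k)"
proof -
  have "Cons 1 ` partition_lists (k - 1) (n - 1) \<inter> map Suc ` partition_lists k (n - k) = {}"
    unfolding partition_lists_def by (auto simp: Cons_eq_map_conv)
  then show ?thesis
    unfolding part_count_eq_card partition_lists_decompose[OF assms]
    by (simp add: card_Un_disjoint finite_partition_lists card_image inj_on_def)
qed

lemma part_count_less: "n < k \<Longrightarrow> part_count k n = 0"
  by (simp add: part_count_eq_card partition_lists_eq_empty)

lemma part_count_0: "part_count 0 n = (if n = 0 then 1 else 0)"
  by (simp add: part_count_eq_card partition_lists_0)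

lemma fps_mult_one_minus_X_power_nth:
  "(f * (1 - fps_X ^ k) :: 'a::comm_ring_1 fps) $ n = f $ n - (if n < k then 0 else f $ (n - k))"
  unfolding right_diff_distrib by (simp add: fps_X_power_mult_right_nth)

definition partition_gf :: "nat \<Rightarrow> 'a::comm_ring_1 fps" where
  "partition_gf k = Abs_fps (\<lambda>n. of_nat (part_count k n))"

lemma partition_gf_rec:
  assumes "1 \<le> k"
  shows "partition_gf k * (1 - fps_X ^ k) = fps_X * partition_gf (k - 1)"
proof (rule fps_ext)
  fix n
  show "(partition_gf k * (1 - fps_X ^ k)) $ n = (fps_X * partition_gf (k - 1)) $ n"
    using assms part_count_rec[OF assms, of n]
    by (cases n) (auto simp: fps_mult_one_minus_X_power_nth partition_gf_def part_count_less)
qed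

lemma partition_gf_mult_prod: "partition_gf k * (\<Prod>m\<in>{1..k}. 1 - fps_X ^ m) = fps_X ^ k"
proof (induction k)
  case 0
  have "partition_gf 0 = 1" by (rule fps_ext) (simp add: partition_gf_def part_count_0)
  then show ?case by simp
next
  case (Suc k)
  have "(partition_gf (Suc k) :: 'a fps) * (\<Prod>m\<in>{1..Suc k}. 1 - fps_X ^ m) =
      (partition_gf (Suc k) * (1 - fps_X ^ Suc k)) * (\<Prod>m\<in>{1..k}. 1 - fps_X ^ m)"
    by (simp add: mult_ac)
  also have "\<dots> = fps_X * (partition_gf k * (\<Prod>m\<in>{1..k}. 1 - fps_X ^ m))"
  proof -
    have "partition_gf (Suc k) * (1 - fps_X ^ Suc k) = fps_X * (partition_gf k :: 'a fps)"
      using partition_gf_rec[of "Suc k"] by simp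
    then show ?thesis by (simp only: mult.assoc[symmetric])
  qed
  also have "\<dots> = fps_X ^ Suc k"
    by (simp only: Suc.IH power_Suc)
  finally show ?case .
qed

lemma prod_one_minus_X_power_nth_0: "(\<Prod>m\<in>{1..k}. 1 - fps_X ^ m :: 'a::comm_ring_1 fps) $ 0 = 1"
  by (induction k) simp_all

definition simplex_ehrhart_fps :: "nat \<Rightarrow> nat \<Rightarrow> 'a::comm_ring_1 fps" where
  "simplex_ehrhart_fps k r = Abs_fps (\<lambda>n. if k dvd n then of_nat ((n div k + r) choose r) else 0)"

lemma dvd_less_iff_eq_0: "n < k \<Longrightarrow> k dvd n \<longleftrightarrow> n = (0::nat)"
  by (auto dest: dvd_imp_le)

lemma simplex_ehrhart_fps_0:
  assumes "1 \<le> k"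
  shows "simplex_ehrhart_fps k 0 * (1 - fps_X ^ k) = 1"
proof (rule fps_ext)
  fix n
  show "(simplex_ehrhart_fps k 0 * (1 - fps_X ^ k)) $ n = 1 $ n"
    using assms dvd_less_iff_eq_0[of n k]
    by (simp add: fps_mult_one_minus_X_power_nth simplex_ehrhart_fps_def dvd_minus_self)
qed

lemma simplex_ehrhart_fps_Suc:
  assumes "1 \<le> k"
  shows "simplex_ehrhart_fps k (Suc r) * (1 - fps_X ^ k) = simplex_ehrhart_fps k r"
proof (rule fps_ext)
  fix n
  show "(simplex_ehrhart_fps k (Suc r) * (1 - fps_X ^ k)) $ n = simplex_ehrhart_fps k r $ n"
  proof (cases "n < k")
    case True
    then show ?thesis
      using dvd_less_iff_eq_0[of n k]
      by (simp add: fps_mult_one_minus_X_power_nth simplex_ehrhart_fps_def)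
  next
    case False
    then obtain t where "n div k = Suc t" "(n - k) div k = t"
      using assms by (simp add: le_div_geq)
    then show ?thesis
      using False
      by (simp add: fps_mult_one_minus_X_power_nth simplex_ehrhart_fps_def dvd_minus_self)
  qed
qed

lemma simplex_ehrhart_fps_mult_power:
  assumes "1 \<le> k"
  shows "simplex_ehrhart_fps k r * (1 - fps_X ^ k) ^ Suc r = 1"
proof (induction r)
  case 0
  then show ?case using simplex_ehrhart_fps_0[OF assms] by simp
next
  case (Suc r)
  have "(simplex_ehrhart_fps k (Suc r) :: 'a fps) * (1 - fps_X ^ k) ^ Suc (Suc r) =
      (simplex_ehrhart_fps k (Suc r) * (1 - fps_X ^ k)) * (1 - fps_X ^ k) ^ Suc r"
    by (simp only: power_Suc mult_ac)
  also have "\<dots> = simplex_ehrhart_fps k r * (1 - fps_X ^ k) ^ Suc r"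
    by (simp only: simplex_ehrhart_fps_Suc[OF assms])
  also have "\<dots> = 1"
    by (rule Suc.IH)
  finally show ?case .
qed

lemma ehrhart_B_eq_simplex_ehrhart_fps_nth:
  assumes "1 \<le> k"
  shows "ehrhart_B k j (j + int m) = simplex_ehrhart_fps k (k - 1) $ m"
proof -
  have "int m div int k + int k - 1 = int (m div k + (k - 1))"
    using assms by (simp add: zdiv_int)
  then show ?thesis
    by (simp add: ehrhart_B_def simplex_ehrhart_fps_def binomial_gbinomial)
qed

lemma partition_gf_eq_A_fps:
  assumes "1 \<le> k"
  shows "partition_gf k = fps_X ^ k * (A_fps k * simplex_ehrhart_fps k (k - 1))"
proof -
  define Q :: "rat fps" where "Q = (\<Prod>m\<in>{1..k}. 1 - fps_X ^ m)"
  have "A_fps k * simplex_ehrhart_fps k (k - 1) =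
      inverse Q * (simplex_ehrhart_fps k (k - 1) * (1 - fps_X ^ k) ^ Suc (k - 1))"
    using assms unfolding A_fps_def Q_def by (simp add: mult_ac)
  also have "\<dots> = inverse Q"
    by (simp only: simplex_ehrhart_fps_mult_power[OF assms] mult_1_right)
  finally have AE: "A_fps k * simplex_ehrhart_fps k (k - 1) = inverse Q" .
  have PQ: "partition_gf k * Q = fps_X ^ k"
    unfolding Q_def by (rule partition_gf_mult_prod)
  have "Q $ 0 = 1"
    unfolding Q_def by (rule prod_one_minus_X_power_nth_0)
  then have "Q * inverse Q = 1"
    by (intro inverse_mult_eq_1') simp
  then have "partition_gf k = partition_gf k * Q * inverse Q"
    by (simp only: mult.assoc mult_1_right)
  then show ?thesis
    by (simp only: AE PQ)
qed

theorem theorem4p4: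
  fixes k n :: nat
  assumes "k \<ge> 1" and "n \<ge> k"
  shows "rat_of_nat (part_count k n) =
    (\<Sum>j = 0..n - k. fps_nth (A_fps k) j * ehrhart_B k (int j) (int n - int k))"
proof -
  have "rat_of_nat (part_count k n) = partition_gf k $ n"
    by (simp add: partition_gf_def)
  also have "\<dots> = (A_fps k * simplex_ehrhart_fps k (k - 1)) $ (n - k)"
    using assms by (simp add: partition_gf_eq_A_fps fps_X_power_mult_nth)
  also have "\<dots> = (\<Sum>j = 0..n - k. A_fps k $ j * simplex_ehrhart_fps k (k - 1) $ (n - k - j))"
    by (rule fps_mult_nth)
  also have "\<dots> = (\<Sum>j = 0..n - k. A_fps k $ j * ehrhart_B k (int j) (int n - int k))"
  proof (rule sum.cong)
    fix j assume "j \<in> {0..n - k}"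
    then have "int n - int k = int j + int (n - k - j)"
      using assms by simp
    then show "A_fps k $ j * simplex_ehrhart_fps k (k - 1) $ (n - k - j) =
        A_fps k $ j * ehrhart_B k (int j) (int n - int k)"
      by (simp only: ehrhart_B_eq_simplex_ehrhart_fps_nth[OF assms(1)])
  qed simp
  finally show ?thesis .
qed

end
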